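(* Let $R$ be a commutative noetherian ring. The class $\mathcal{Z}$ of $R$-modules is a Serre subcategory of the category of $R$-modules: it is closed under submodules, quotient modules and extensions (i.e. if $0\to M'\to M\to M''\to 0$ is exact with $M',M''\in\mathcal{Z}$ then $M\in\mathcal{Z}$).
   Context: An $R$-module $M$ belongs to the class $\mathcal{Z}$ if for every descending chain $N_1\supseteq N_2\supseteq N_3\supseteq\cdots$ of submodules of $M$ there is $n$ such that $\operatorname{Supp}_R(N_i/N_{i+1})\subseteq\operatorname{Max}R$ for all $i\ge n$. ($\operatorname{Max}R$ is the set of maximal ideals of $R$.) *)

theory Defs
  imports "HOL-Algebra.Algebra"
begin

definition MaxSpec :: "('r, 'x) ring_scheme \<Rightarrow> 'r set set" where
  "MaxSpec R = {m. maximalideal m R}"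

text \<open>Support of the subquotient module A/B (B \<subseteq> A submodules of M):
  the prime ideals p with (A/B)_p \<noteq> 0.  Unfolded: (A/B)_p \<noteq> 0 iff some class
  x + B (x \<in> A) has nonzero image x/1 in the localization, i.e. no s \<notin> p
  satisfies s x \<in> B.\<close>
definition Supp_quot ::
  "('r, 'x) ring_scheme \<Rightarrow> ('r, 'a) module \<Rightarrow> 'a set \<Rightarrow> 'a set \<Rightarrow> 'r set set" where
  "Supp_quot R M A B =
     {p. primeideal p R \<and> (\<exists>x\<in>A. \<forall>s\<in>carrier R - p. s \<odot>\<^bsub>M\<^esub> x \<notin> B)}"

definition in_Z :: "('r, 'x) ring_scheme \<Rightarrow> ('r, 'a) module \<Rightarrow> bool" where
  "in_Z R M \<longleftrightarrow>
     (\<forall>N :: nat \<Rightarrow> 'a set.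
        (\<forall>i. submodule (N i) R M) \<and> (\<forall>i. N (Suc i) \<subseteq> N i) \<longrightarrow>
        (\<exists>n. \<forall>i\<ge>n. Supp_quot R M (N i) (N (Suc i)) \<subseteq> MaxSpec R))"

definition module_hom ::
  "('r, 'x) ring_scheme \<Rightarrow> ('r, 'a) module \<Rightarrow> ('r, 'b) module \<Rightarrow> ('a \<Rightarrow> 'b) set" where
  "module_hom R M N =
     {f. f \<in> carrier M \<rightarrow> carrier N \<and>
         (\<forall>x\<in>carrier M. \<forall>y\<in>carrier M. f (x \<oplus>\<^bsub>M\<^esub> y) = f x \<oplus>\<^bsub>N\<^esub> f y) \<and>
         (\<forall>a\<in>carrier R. \<forall>x\<in>carrier M. f (a \<odot>\<^bsub>M\<^esub> x) = a \<odot>\<^bsub>N\<^esub> f x)}"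

end

theory Submission
  imports Defs
begin

(* All three closure
   properties reduce to one comparison principle for the class Z:

     M is in Z as soon as every descending chain K of submodules of M admits descending
     chains A in some M' in Z and B in some M'' in Z with
       Supp(K_i/K_(i+1)) \<subseteq> Supp(A_i/A_(i+1)) \<union> Supp(B_i/B_(i+1))  for all i.

   For a submodule N of M the chain is already a chain of M (with the same supports);
   for a surjection g : M \<rightarrow> M'' one pulls the chain back along g; for an exact
   sequence 0 \<rightarrow> M' \<rightarrow> M \<rightarrow> M'' \<rightarrow> 0 one pulls the chain back to M' and pushes it
   forward to M'', and a diagram chase (Supp of an extension lies in the union of the
   supports) gives the required inclusion. *)

lemma submodule_closed:
  assumes "module R M" "submodule H R M"
  shows "H \<subseteq> carrier M" "\<zero>\<^bsub>M\<^esub> \<in> H"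
    "\<And>a b. a \<in> H \<Longrightarrow> b \<in> H \<Longrightarrow> a \<oplus>\<^bsub>M\<^esub> b \<in> H"
    "\<And>a x. a \<in> carrier R \<Longrightarrow> x \<in> H \<Longrightarrow> a \<odot>\<^bsub>M\<^esub> x \<in> H"
    "\<And>a. a \<in> H \<Longrightarrow> \<ominus>\<^bsub>M\<^esub> a \<in> H"
proof -
  interpret module R M by fact
  show sub: "H \<subseteq> carrier M" and "\<And>a b. a \<in> H \<Longrightarrow> b \<in> H \<Longrightarrow> a \<oplus>\<^bsub>M\<^esub> b \<in> H"
    and sm: "\<And>a x. a \<in> carrier R \<Longrightarrow> x \<in> H \<Longrightarrow> a \<odot>\<^bsub>M\<^esub> x \<in> H"
    and "\<And>a. a \<in> H \<Longrightarrow> \<ominus>\<^bsub>M\<^esub> a \<in> H"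
    using submoduleE[OF assms(2)] by blast+
  obtain a where a: "a \<in> H" using submoduleE(2)[OF assms(2)] by blast
  have "\<zero>\<^bsub>M\<^esub> = \<zero>\<^bsub>R\<^esub> \<odot>\<^bsub>M\<^esub> a" using a sub by auto
  then show "\<zero>\<^bsub>M\<^esub> \<in> H" using sm[OF _ a] by simp
qed

text \<open>A subset containing zero and closed under addition and scalar multiplication is a
  submodule; closure under negation follows from scaling by -1.\<close>
lemma submoduleI_no_neg:
  assumes "module R M" "H \<subseteq> carrier M" "\<zero>\<^bsub>M\<^esub> \<in> H"
    "\<And>a b. a \<in> H \<Longrightarrow> b \<in> H \<Longrightarrow> a \<oplus>\<^bsub>M\<^esub> b \<in> H"
    "\<And>a x. a \<in> carrier R \<Longrightarrow> x \<in> H \<Longrightarrow> a \<odot>\<^bsub>M\<^esub> x \<in> H"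
  shows "submodule H R M"
proof -
  interpret module R M by fact
  show ?thesis
  proof (rule submoduleI)
    fix a assume a: "a \<in> H"
    then have "(\<ominus>\<^bsub>R\<^esub> \<one>\<^bsub>R\<^esub>) \<odot>\<^bsub>M\<^esub> a = \<ominus>\<^bsub>M\<^esub> a"
      using smult_l_minus assms(2) by auto
    then show "\<ominus>\<^bsub>M\<^esub> a \<in> H" using assms(5)[OF _ a, of "\<ominus>\<^bsub>R\<^esub> \<one>\<^bsub>R\<^esub>"] by simp
  qed (use assms in auto)
qed

lemma module_hom_closed:
  assumes "module R M" "module R N" "f \<in> module_hom R M N"
  shows "\<And>x. x \<in> carrier M \<Longrightarrow> f x \<in> carrier N"
    "\<And>x y. x \<in> carrier M \<Longrightarrow> y \<in> carrier M \<Longrightarrow> f (x \<oplus>\<^bsub>M\<^esub> y) = f x \<oplus>\<^bsub>N\<^esub> f y"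
    "\<And>a x. a \<in> carrier R \<Longrightarrow> x \<in> carrier M \<Longrightarrow> f (a \<odot>\<^bsub>M\<^esub> x) = a \<odot>\<^bsub>N\<^esub> f x"
    "f \<zero>\<^bsub>M\<^esub> = \<zero>\<^bsub>N\<^esub>"
    "\<And>x. x \<in> carrier M \<Longrightarrow> f (\<ominus>\<^bsub>M\<^esub> x) = \<ominus>\<^bsub>N\<^esub> f x"
proof -
  interpret A: module R M by fact
  interpret B: module R N by fact
  show cl: "\<And>x. x \<in> carrier M \<Longrightarrow> f x \<in> carrier N"
    and "\<And>x y. x \<in> carrier M \<Longrightarrow> y \<in> carrier M \<Longrightarrow> f (x \<oplus>\<^bsub>M\<^esub> y) = f x \<oplus>\<^bsub>N\<^esub> f y"
    and sm: "\<And>a x. a \<in> carrier R \<Longrightarrow> x \<in> carrier M \<Longrightarrow> f (a \<odot>\<^bsub>M\<^esub> x) = a \<odot>\<^bsub>N\<^esub> f x"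
    using assms(3) unfolding module_hom_def by auto
  have "f (\<zero>\<^bsub>R\<^esub> \<odot>\<^bsub>M\<^esub> \<zero>\<^bsub>M\<^esub>) = \<zero>\<^bsub>R\<^esub> \<odot>\<^bsub>N\<^esub> f \<zero>\<^bsub>M\<^esub>" by (rule sm) auto
  then show "f \<zero>\<^bsub>M\<^esub> = \<zero>\<^bsub>N\<^esub>" using cl[of "\<zero>\<^bsub>M\<^esub>"] by simp
  fix x assume x: "x \<in> carrier M"
  have "f ((\<ominus>\<^bsub>R\<^esub> \<one>\<^bsub>R\<^esub>) \<odot>\<^bsub>M\<^esub> x) = (\<ominus>\<^bsub>R\<^esub> \<one>\<^bsub>R\<^esub>) \<odot>\<^bsub>N\<^esub> f x" by (rule sm) (use x in auto)
  then show "f (\<ominus>\<^bsub>M\<^esub> x) = \<ominus>\<^bsub>N\<^esub> f x"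
    using x cl[OF x] A.smult_l_minus[of "\<one>\<^bsub>R\<^esub>" x] B.smult_l_minus[of "\<one>\<^bsub>R\<^esub>" "f x"] by simp
qed

lemma submodule_trans:
  assumes M: "module R M" and N: "submodule N R M" and K: "submodule K R (M\<lparr>carrier := N\<rparr>)"
  shows "submodule K R M"
proof -
  note S = submodule_closed[OF submodule.submodule_is_module[OF N M] K]
  show ?thesis
    using S(1) submodule_closed(1)[OF M N] S(2-4) by (intro submoduleI_no_neg[OF M]) auto
qed

lemma submodule_vimage:
  assumes M: "module R M" and N: "module R N" and f: "f \<in> module_hom R M N"
    and K: "submodule K R N"
  shows "submodule {x \<in> carrier M. f x \<in> K} R M"
proof -
  interpret module R M by fact
  note F = module_hom_closed[OF M N f]
  note S = submodule_closed[OF N K]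
  show ?thesis
    by (rule submoduleI_no_neg[OF M]) (use S(2-4) F(2-4) in auto)
qed

lemma submodule_image:
  assumes M: "module R M" and N: "module R N" and f: "f \<in> module_hom R M N"
    and K: "submodule K R M"
  shows "submodule (f ` K) R N"
proof -
  note F = module_hom_closed[OF M N f]
  note S = submodule_closed[OF M K]
  show ?thesis
  proof (rule submoduleI_no_neg[OF N])
    show "f ` K \<subseteq> carrier N" using S(1) F(1) by blast
    show "\<zero>\<^bsub>N\<^esub> \<in> f ` K" using S(2) F(4) by (metis imageI)
  next
    fix a b assume "a \<in> f ` K" "b \<in> f ` K"
    then obtain u v where "u \<in> K" "v \<in> K" "a = f u" "b = f v" by blast
    then show "a \<oplus>\<^bsub>N\<^esub> b \<in> f ` K" using S(1,3) F(2)[of u v] by (metis imageI subsetD)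
  next
    fix a x assume a: "a \<in> carrier R" and "x \<in> f ` K"
    then obtain u where "u \<in> K" "x = f u" by blast
    then show "a \<odot>\<^bsub>N\<^esub> x \<in> f ` K" using S(1,4) F(3)[of a u] a by (metis imageI subsetD)
  qed
qed

text \<open>The class of x in (M/B)_p is zero: some s outside p multiplies x into B.\<close>
definition vanishes_mod ::
  "('r, 'x) ring_scheme \<Rightarrow> ('r, 'a) module \<Rightarrow> 'r set \<Rightarrow> 'a \<Rightarrow> 'a set \<Rightarrow> bool" where
  "vanishes_mod R M p x B \<longleftrightarrow> (\<exists>s\<in>carrier R - p. s \<odot>\<^bsub>M\<^esub> x \<in> B)"

lemma Supp_quot_iff:
  "p \<in> Supp_quot R M A B \<longleftrightarrow> primeideal p R \<and> (\<exists>x\<in>A. \<not> vanishes_mod R M p x B)"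
  unfolding Supp_quot_def vanishes_mod_def by auto

lemma Supp_quot_carrier_update: "Supp_quot R (M\<lparr>carrier := N\<rparr>) A B = Supp_quot R M A B"
  unfolding Supp_quot_def by simp

text \<open>If every element of K lifts along g, the support of K/K' is contained in the support
  of the pulled-back subquotient: a lift that vanishes at p maps to an element that
  vanishes at p.\<close>
lemma Supp_quot_vimage:
  assumes M: "module R M" and N: "module R N" and g: "g \<in> module_hom R M N"
    and lift: "K \<subseteq> g ` carrier M"
  shows "Supp_quot R N K K'
           \<subseteq> Supp_quot R M {x \<in> carrier M. g x \<in> K} {x \<in> carrier M. g x \<in> K'}"
proof
  fix p assume "p \<in> Supp_quot R N K K'"
  then obtain y where p: "primeideal p R" and y: "y \<in> K" and nv: "\<not> vanishes_mod R N p y K'"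
    unfolding Supp_quot_iff by blast
  obtain x where x: "x \<in> carrier M" "g x = y" using y lift by blast
  have "\<not> vanishes_mod R M p x {x \<in> carrier M. g x \<in> K'}"
    using nv x module_hom_closed(3)[OF M N g] unfolding vanishes_mod_def by auto
  with p x y show "p \<in> Supp_quot R M {x \<in> carrier M. g x \<in> K} {x \<in> carrier M. g x \<in> K'}"
    unfolding Supp_quot_iff by auto
qed

lemma exact_lift_difference:
  assumes M: "module R M" and M'': "module R M''" and g: "g \<in> module_hom R M M''"
    and exact: "{x \<in> carrier M. g x = \<zero>\<^bsub>M''\<^esub>} = f ` carrier M'"
    and K: "submodule K R M" and K'K: "K' \<subseteq> K"
    and x: "x \<in> K" and s: "s \<in> carrier R" and sx: "s \<odot>\<^bsub>M''\<^esub> g x \<in> g ` K'"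
  obtains z w where "z \<in> carrier M'" "f z \<in> K" "w \<in> K'" "s \<odot>\<^bsub>M\<^esub> x = f z \<oplus>\<^bsub>M\<^esub> w"
proof -
  interpret MM: module R M by fact
  interpret MM'': module R M'' by fact
  note G = module_hom_closed[OF M M'' g]
  note SK = submodule_closed[OF M K]
  obtain w where w: "w \<in> K'" and gw: "s \<odot>\<^bsub>M''\<^esub> g x = g w" using sx by blast
  have wK: "w \<in> K" using w K'K by blast
  have xc: "x \<in> carrier M" and wc: "w \<in> carrier M" using x wK SK(1) by blast+
  have sxc: "s \<odot>\<^bsub>M\<^esub> x \<in> carrier M" and nwc: "\<ominus>\<^bsub>M\<^esub> w \<in> carrier M"
    using s xc wc by simp_all
  define d where "d = s \<odot>\<^bsub>M\<^esub> x \<oplus>\<^bsub>M\<^esub> \<ominus>\<^bsub>M\<^esub> w"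
  have dc: "d \<in> carrier M" unfolding d_def using sxc nwc by simp
  have "g d = g (s \<odot>\<^bsub>M\<^esub> x) \<oplus>\<^bsub>M''\<^esub> g (\<ominus>\<^bsub>M\<^esub> w)"
    unfolding d_def by (rule G(2)[OF sxc nwc])
  also have "\<dots> = s \<odot>\<^bsub>M''\<^esub> g x \<oplus>\<^bsub>M''\<^esub> \<ominus>\<^bsub>M''\<^esub> (s \<odot>\<^bsub>M''\<^esub> g x)"
    by (simp only: G(3)[OF s xc] G(5)[OF wc] gw)
  also have "\<dots> = \<zero>\<^bsub>M''\<^esub>" by (rule MM''.r_neg) (use G(1)[OF xc] s in simp)
  finally have "d \<in> f ` carrier M'" using dc exact by blast
  then obtain z where z: "z \<in> carrier M'" "f z = d" by blast
  have "d \<in> K" unfolding d_def by (rule SK(3)[OF SK(4)[OF s x] SK(5)[OF wK]])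
  moreover have "d \<oplus>\<^bsub>M\<^esub> w = s \<odot>\<^bsub>M\<^esub> x"
    unfolding d_def using sxc nwc wc by (simp add: MM.a_assoc MM.l_neg)
  ultimately show thesis using that z w by simp
qed

lemma Supp_quot_extension:
  assumes M': "module R M'" and M: "module R M" and M'': "module R M''"
    and f: "f \<in> module_hom R M' M" and g: "g \<in> module_hom R M M''"
    and exact: "{x \<in> carrier M. g x = \<zero>\<^bsub>M''\<^esub>} = f ` carrier M'"
    and K: "submodule K R M" and K': "submodule K' R M" and K'K: "K' \<subseteq> K"
  shows "Supp_quot R M K K'
           \<subseteq> Supp_quot R M' {z \<in> carrier M'. f z \<in> K} {z \<in> carrier M'. f z \<in> K'}
             \<union> Supp_quot R M'' (g ` K) (g ` K')"
proof
  fix p assume "p \<in> Supp_quot R M K K'"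
  then obtain x where p: "primeideal p R" and x: "x \<in> K" and nv: "\<not> vanishes_mod R M p x K'"
    unfolding Supp_quot_iff by blast
  interpret P: primeideal p R by fact
  interpret MM: module R M by fact
  note F = module_hom_closed[OF M' M f]
  note SK' = submodule_closed[OF M K']
  show "p \<in> Supp_quot R M' {z \<in> carrier M'. f z \<in> K} {z \<in> carrier M'. f z \<in> K'}
             \<union> Supp_quot R M'' (g ` K) (g ` K')"
  proof (rule ccontr)
    assume "\<not> ?thesis"
    then have van'': "\<And>y. y \<in> g ` K \<Longrightarrow> vanishes_mod R M'' p y (g ` K')"
      using p by (auto simp: Supp_quot_iff)
    from \<open>\<not> ?thesis\<close> have van': "\<And>z. z \<in> carrier M' \<Longrightarrow> f z \<in> K \<Longrightarrow>
        vanishes_mod R M' p z {z \<in> carrier M'. f z \<in> K'}"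
      using p by (auto simp: Supp_quot_iff)
    obtain s where s: "s \<in> carrier R - p" and sx: "s \<odot>\<^bsub>M''\<^esub> g x \<in> g ` K'"
      using van''[of "g x"] x unfolding vanishes_mod_def by blast
    obtain z w where z: "z \<in> carrier M'" "f z \<in> K" and w: "w \<in> K'"
      and sxe: "s \<odot>\<^bsub>M\<^esub> x = f z \<oplus>\<^bsub>M\<^esub> w"
      using exact_lift_difference[OF M M'' g exact K K'K x _ sx] s by blast
    obtain t where t: "t \<in> carrier R - p" and tz: "f (t \<odot>\<^bsub>M'\<^esub> z) \<in> K'"
      using van'[OF z] unfolding vanishes_mod_def by blast
    have sc: "s \<in> carrier R" and tc: "t \<in> carrier R" using s t by blast+
    have xc: "x \<in> carrier M" and wc: "w \<in> carrier M" and fzc: "f z \<in> carrier M"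
      using x w z K'K submodule_closed(1)[OF M K] by blast+
    have "(t \<otimes>\<^bsub>R\<^esub> s) \<odot>\<^bsub>M\<^esub> x = t \<odot>\<^bsub>M\<^esub> (f z \<oplus>\<^bsub>M\<^esub> w)"
      using sc tc xc sxe by (simp add: MM.smult_assoc1)
    also have "\<dots> = f (t \<odot>\<^bsub>M'\<^esub> z) \<oplus>\<^bsub>M\<^esub> t \<odot>\<^bsub>M\<^esub> w"
      using tc wc fzc z F(3) by (simp add: MM.smult_r_distr)
    also have "\<dots> \<in> K'" using SK'(3)[OF tz SK'(4)[OF tc w]] .
    finally have "(t \<otimes>\<^bsub>R\<^esub> s) \<odot>\<^bsub>M\<^esub> x \<in> K'" .
    moreover have "t \<otimes>\<^bsub>R\<^esub> s \<in> carrier R - p"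
      using s t P.I_prime[OF tc sc] P.m_closed[OF tc sc] by blast
    ultimately show False using nv unfolding vanishes_mod_def by blast
  qed
qed

definition descending_chain :: "('r, 'x) ring_scheme \<Rightarrow> ('r, 'a) module \<Rightarrow> (nat \<Rightarrow> 'a set) \<Rightarrow> bool"
  where "descending_chain R M K \<longleftrightarrow> (\<forall>i. submodule (K i) R M) \<and> (\<forall>i. K (Suc i) \<subseteq> K i)"

lemma in_Z_iff:
  "in_Z R M \<longleftrightarrow>
     (\<forall>K. descending_chain R M K \<longrightarrow>
        (\<exists>n. \<forall>i\<ge>n. Supp_quot R M (K i) (K (Suc i)) \<subseteq> MaxSpec R))"
  unfolding in_Z_def descending_chain_def ..

lemma in_Z_by_cover:
  fixes M :: "('r, 'a) module" and M' :: "('r, 'b) module" and M'' :: "('r, 'c) module"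
  assumes Z': "in_Z R M'" and Z'': "in_Z R M''"
    and cover: "\<And>K. descending_chain R M K \<Longrightarrow>
       \<exists>A B. descending_chain R M' A \<and> descending_chain R M'' B \<and>
         (\<forall>i. Supp_quot R M (K i) (K (Suc i))
               \<subseteq> Supp_quot R M' (A i) (A (Suc i)) \<union> Supp_quot R M'' (B i) (B (Suc i)))"
  shows "in_Z R M"
  unfolding in_Z_iff
proof (intro allI impI)
  fix K assume "descending_chain R M K"
  then obtain A B where A: "descending_chain R M' A" and B: "descending_chain R M'' B"
    and sub: "\<forall>i. Supp_quot R M (K i) (K (Suc i))
               \<subseteq> Supp_quot R M' (A i) (A (Suc i)) \<union> Supp_quot R M'' (B i) (B (Suc i))"
    using cover by blast
  obtain n1 where "\<forall>i\<ge>n1. Supp_quot R M' (A i) (A (Suc i)) \<subseteq> MaxSpec R"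
    using Z' A unfolding in_Z_iff by blast
  moreover obtain n2 where "\<forall>i\<ge>n2. Supp_quot R M'' (B i) (B (Suc i)) \<subseteq> MaxSpec R"
    using Z'' B unfolding in_Z_iff by blast
  ultimately have "\<forall>i\<ge>max n1 n2. Supp_quot R M (K i) (K (Suc i)) \<subseteq> MaxSpec R"
    using sub by fastforce
  then show "\<exists>n. \<forall>i\<ge>n. Supp_quot R M (K i) (K (Suc i)) \<subseteq> MaxSpec R" ..
qed

text \<open>Z is closed under submodules: a chain in N is a chain in M with the same supports.\<close>
lemma in_Z_submodule:
  assumes M: "module R M" and N: "submodule N R M" and Z: "in_Z R M"
  shows "in_Z R (M\<lparr>carrier := N\<rparr>)"
proof (rule in_Z_by_cover[OF Z Z])
  fix K assume "descending_chain R (M\<lparr>carrier := N\<rparr>) K"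
  then have "descending_chain R M K"
    using submodule_trans[OF M N] unfolding descending_chain_def by blast
  then show "\<exists>A B. descending_chain R M A \<and> descending_chain R M B \<and>
      (\<forall>i. Supp_quot R (M\<lparr>carrier := N\<rparr>) (K i) (K (Suc i))
            \<subseteq> Supp_quot R M (A i) (A (Suc i)) \<union> Supp_quot R M (B i) (B (Suc i)))"
    unfolding Supp_quot_carrier_update by blast
qed

text \<open>Z is closed under surjective linear images: pull the chain back along g.\<close>
lemma in_Z_surjective_image:
  assumes M: "module R M" and M'': "module R M''" and g: "g \<in> module_hom R M M''"
    and surj: "g ` carrier M = carrier M''" and Z: "in_Z R M"
  shows "in_Z R M''"
proof (rule in_Z_by_cover[OF Z Z])
  fix K assume K: "descending_chain R M'' K"
  define A where "A i = {x \<in> carrier M. g x \<in> K i}" for i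
  have "descending_chain R M A"
    using K submodule_vimage[OF M M'' g] unfolding descending_chain_def A_def by blast
  moreover have "Supp_quot R M'' (K i) (K (Suc i)) \<subseteq> Supp_quot R M (A i) (A (Suc i))" for i
    unfolding A_def using K surj submodule_closed(1)[OF M'']
    by (intro Supp_quot_vimage[OF M M'' g]) (auto simp: descending_chain_def)
  ultimately show "\<exists>A B. descending_chain R M A \<and> descending_chain R M B \<and>
      (\<forall>i. Supp_quot R M'' (K i) (K (Suc i))
            \<subseteq> Supp_quot R M (A i) (A (Suc i)) \<union> Supp_quot R M (B i) (B (Suc i)))"
    by blast
qed

text \<open>Z is closed under extensions: pull the chain back to M' and push it to M''.\<close>
lemma in_Z_extension:
  assumes M': "module R M'" and M: "module R M" and M'': "module R M''"
    and f: "f \<in> module_hom R M' M" and g: "g \<in> module_hom R M M''"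
    and exact: "{x \<in> carrier M. g x = \<zero>\<^bsub>M''\<^esub>} = f ` carrier M'"
    and Z': "in_Z R M'" and Z'': "in_Z R M''"
  shows "in_Z R M"
proof (rule in_Z_by_cover[OF Z' Z''])
  fix K assume K: "descending_chain R M K"
  define A where "A i = {z \<in> carrier M'. f z \<in> K i}" for i
  define B where "B i = g ` K i" for i
  have "descending_chain R M' A"
    using K submodule_vimage[OF M' M f] unfolding descending_chain_def A_def by blast
  moreover have "descending_chain R M'' B"
    using K submodule_image[OF M M'' g] unfolding descending_chain_def B_def by blast
  moreover have "Supp_quot R M (K i) (K (Suc i))
      \<subseteq> Supp_quot R M' (A i) (A (Suc i)) \<union> Supp_quot R M'' (B i) (B (Suc i))" for i
    unfolding A_def B_def using K
    by (intro Supp_quot_extension[OF M' M M'' f g exact]) (auto simp: descending_chain_def)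
  ultimately show "\<exists>A B. descending_chain R M' A \<and> descending_chain R M'' B \<and>
      (\<forall>i. Supp_quot R M (K i) (K (Suc i))
            \<subseteq> Supp_quot R M' (A i) (A (Suc i)) \<union> Supp_quot R M'' (B i) (B (Suc i)))"
    by blast
qed

theorem proposition2p6:
  fixes R :: "('r, 'x) ring_scheme"
  assumes "cring R" and "noetherian_ring R"
  shows
    \<comment> \<open>closed under submodules\<close>
    "(\<forall>(M :: ('r, 'a) module) N.
        module R M \<and> submodule N R M \<and> in_Z R M \<longrightarrow> in_Z R (M\<lparr>carrier := N\<rparr>))
     \<and>
     \<comment> \<open>closed under quotient modules (surjective R-linear images)\<close>
     (\<forall>(M :: ('r, 'a) module) (M'' :: ('r, 'c) module) g.
        module R M \<and> module R M'' \<and> g \<in> module_hom R M M'' \<and>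
        g ` carrier M = carrier M'' \<and> in_Z R M \<longrightarrow> in_Z R M'')
     \<and>
     \<comment> \<open>closed under extensions: 0 \<rightarrow> M' \<rightarrow> M \<rightarrow> M'' \<rightarrow> 0 exact\<close>
     (\<forall>(M' :: ('r, 'b) module) (M :: ('r, 'a) module) (M'' :: ('r, 'c) module) f g.
        module R M' \<and> module R M \<and> module R M'' \<and>
        f \<in> module_hom R M' M \<and> g \<in> module_hom R M M'' \<and>
        inj_on f (carrier M') \<and> g ` carrier M = carrier M'' \<and>
        {x \<in> carrier M. g x = \<zero>\<^bsub>M''\<^esub>} = f ` carrier M' \<and>
        in_Z R M' \<and> in_Z R M'' \<longrightarrow> in_Z R M)"
  \<comment> \<open>each conjunct is one of the three closure lemmas\<close>
  apply (intro conjI allI impI; elim conjE)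
  subgoal by (rule in_Z_submodule)
  subgoal by (rule in_Z_surjective_image)
  subgoal by (rule in_Z_extension)
  done

end
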